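(* For every integer $n\ge 0$, $|\mathfrak D^1_{2n}(2341,2413)|=s_{n+1}$, where $s_m$ is the $m$th little Schröder number.
   Context: A Dumont permutation of the first kind of length $2n$ is a permutation $\pi\in\mathfrak S_{2n}$ such that for every $i=1,\dots,2n$: if $\pi(i)$ is even then $i<2n$ and $\pi(i)>\pi(i+1)$; if $\pi(i)$ is odd then $i=2n$ or $\pi(i)<\pi(i+1)$. $\mathfrak D^1_{2n}$ denotes the set of these ($\mathfrak D^1_0$ consists of the empty permutation). A permutation $\sigma$ contains a pattern $\tau\in\mathfrak S_k$ if some subsequence $(\sigma(i_1),\dots,\sigma(i_k))$, $i_1<\dots<i_k$, is order-isomorphic to $\tau$; otherwise $\sigma$ avoids $\tau$. $\mathfrak D^1_{2n}(T)$ denotes the set of permutations in $\mathfrak D^1_{2n}$ avoiding every pattern in $T$. The little Schröder numbers $s_1,s_2,\dots$ ($1,1,3,11,45,\dots$) are defined by the generating function $\sum_{m\ge 1}s_mx^m=\frac{1+x-\sqrt{1-6x+x^2}}{4}$. *)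

theory Defs
  imports Main "HOL-Library.Sublist" "HOL-Computational_Algebra.Formal_Power_Series"
begin

text \<open>Permutations of [1..m] are represented as lists p; pi(i) = p ! (i - 1).\<close>

definition is_perm_list :: "nat \<Rightarrow> nat list \<Rightarrow> bool" where
  "is_perm_list m p \<longleftrightarrow> length p = m \<and> distinct p \<and> set p = {1..m}"

text \<open>Dumont permutations of the first kind of length 2n (positions 0-indexed).\<close>
definition dumont1 :: "nat \<Rightarrow> nat list set" where
  "dumont1 n = {p. is_perm_list (2*n) p \<and>
     (\<forall>i < 2*n. (even (p ! i) \<longrightarrow> i + 1 < 2*n \<and> p ! i > p ! (i+1)) \<and>
                 (odd (p ! i) \<longrightarrow> i + 1 = 2*n \<or> p ! i < p ! (i+1)))}"

definition order_iso :: "nat list \<Rightarrow> nat list \<Rightarrow> bool" where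
  "order_iso xs ys \<longleftrightarrow> length xs = length ys \<and>
     (\<forall>a < length xs. \<forall>b < length xs. xs ! a < xs ! b \<longleftrightarrow> ys ! a < ys ! b)"

definition contains_pattern :: "nat list \<Rightarrow> nat list \<Rightarrow> bool" where
  "contains_pattern \<sigma> \<tau> \<longleftrightarrow> (\<exists>xs. subseq xs \<sigma> \<and> order_iso xs \<tau>)"

definition avoids_all :: "nat list \<Rightarrow> nat list set \<Rightarrow> bool" where
  "avoids_all \<sigma> T \<longleftrightarrow> (\<forall>\<tau>\<in>T. \<not> contains_pattern \<sigma> \<tau>)"

definition dumont1_avoiding :: "nat \<Rightarrow> nat list set \<Rightarrow> nat list set" where
  "dumont1_avoiding n T = {p \<in> dumont1 n. avoids_all p T}"

text \<open>Little Schroeder numbers: coefficients of (1 + x - sqrt(1 - 6x + x^2))/4,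
  the square root being the formal power series square root with constant term 1.\<close>
definition little_schroeder_gf :: "real fps" where
  "little_schroeder_gf = fps_const (1/4) *
     (1 + fps_X - fps_radical (\<lambda>k x. root k x) 2 (1 - fps_const 6 * fps_X + fps_X ^ 2))"

definition little_schroeder :: "nat \<Rightarrow> real" where
  "little_schroeder m = fps_nth little_schroeder_gf m"

end

(* Write D(m) for the Dumont permutations of length 2m avoiding 2341 and 2413 (dumont_av m) and
   c(m) for their number.  In an element of D(n+1) the letter 2n+1 is either last, with 2n+2 somewhere
   before it, or immediately followed by 2n+2.  Avoiding 2413, resp. 2341, forces every letter left of
   the two top letters to be smaller than every letter between them, resp. right of them.  So the
   permutation is s (2n+2) R (2n+1) or s (2n+1) (2n+2) R, where s lies in D(k) and R is a shifted copy
   of an element of D(n-k), nonempty in the second case; the length of s is even because the least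
   letter of a nonempty Dumont word is odd.  Conversely every such gluing is admissible.  Hence
   c(n+1) = sum_{k<=n} c(k) c(n-k) + sum_{k<n} c(k) c(n-k), so C = sum_n c(n) x^n satisfies
   C = 1 + x (2 C^2 - C), and x C is the root of 2 S^2 - (1 + x) S + x = 0 vanishing at 0, which is
   the little Schroeder series. *)

theory Submission
  imports Defs
begin

unbundle fps_syntax

section \<open>Little Schroeder numbers\<close>

function little_schroeder_rec :: "nat \<Rightarrow> nat" where
  "little_schroeder_rec 0 = 1"
| "little_schroeder_rec (Suc n) =
     (\<Sum>k\<le>n. little_schroeder_rec k * little_schroeder_rec (n - k)) +
     (\<Sum>k<n. little_schroeder_rec k * little_schroeder_rec (n - k))"
  by pat_completeness auto
termination by (relation "measure id") auto

definition little_schroeder_rec_fps :: "real fps" where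
  "little_schroeder_rec_fps = Abs_fps (\<lambda>n. real (little_schroeder_rec n))"

lemma little_schroeder_rec_fps_eq:
  defines "A \<equiv> little_schroeder_rec_fps"
  shows "A = 1 + fps_X * (2 * A\<^sup>2 - A)"
proof (rule fps_ext)
  fix n
  show "A $ n = (1 + fps_X * (2 * A\<^sup>2 - A)) $ n"
  proof (cases n)
    case 0
    then show ?thesis by (simp add: A_def little_schroeder_rec_fps_def)
  next
    case (Suc m)
    let ?c = "\<lambda>k. real (little_schroeder_rec k)"
    have sq: "(A\<^sup>2) $ m = (\<Sum>k\<le>m. ?c k * ?c (m - k))"
      by (simp add: A_def little_schroeder_rec_fps_def power2_eq_square fps_mult_nth atLeast0AtMost)
    have "(\<Sum>k\<le>m. ?c k * ?c (m - k)) = (\<Sum>k<m. ?c k * ?c (m - k)) + ?c m"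
      by (simp add: lessThan_Suc_atMost[symmetric])
    moreover have "(2 * A\<^sup>2) $ m = 2 * (A\<^sup>2) $ m"
      by (subst numeral_fps_const) simp
    ultimately show ?thesis
      unfolding sq using Suc by (simp add: A_def little_schroeder_rec_fps_def)
  qed
qed

lemma little_schroeder_gf_unique:
  fixes S :: "real fps"
  assumes "S $ 0 = 0" and "2 * S\<^sup>2 - (1 + fps_X) * S + fps_X = 0"
  shows "little_schroeder_gf = S"
proof -
  define Q where "Q = 1 + fps_X - 4 * S"
  \<comment> \<open>fps_radical picks the square root with constant term 1, which is Q since S $ 0 = 0.\<close>
  have "Q\<^sup>2 = (1 + fps_X)\<^sup>2 + 8 * (2 * S\<^sup>2 - (1 + fps_X) * S + fps_X) - 8 * fps_X"
    by (simp add: Q_def algebra_simps power2_eq_square)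
  also have "\<dots> = 1 - fps_const 6 * fps_X + fps_X ^ 2"
    by (simp only: assms(2)) (simp add: algebra_simps power2_eq_square flip: numeral_fps_const)
  finally have sqrt: "fps_radical (\<lambda>k x. root k x) 2 (1 - fps_const 6 * fps_X + fps_X ^ 2) = Q"
    using radical_power[of "\<lambda>k x. root k x" 1 Q] assms(1) by (simp add: Q_def numeral_2_eq_2)
  have "fps_const (1/4) * (4 :: real fps) = 1"
    by (simp add: numeral_fps_const)
  then show ?thesis
    unfolding little_schroeder_gf_def sqrt by (simp add: Q_def algebra_simps mult.assoc[symmetric])
qed

lemma little_schroeder_Suc_eq_rec: "little_schroeder (Suc n) = real (little_schroeder_rec n)"
proof -
  define A where "A = little_schroeder_rec_fps"
  have "2 * (fps_X * A)\<^sup>2 - (1 + fps_X) * (fps_X * A) + fps_X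
        = fps_X * (2 * fps_X * A\<^sup>2 - (1 + fps_X) * A + 1)"
    by (simp add: algebra_simps power2_eq_square)
  also have "2 * fps_X * A\<^sup>2 - (1 + fps_X) * A + 1 = 0"
    using little_schroeder_rec_fps_eq[folded A_def] by (simp add: algebra_simps)
  finally have gf: "little_schroeder_gf = fps_X * A"
    by (intro little_schroeder_gf_unique) simp_all
  show ?thesis
    unfolding little_schroeder_def gf by (simp add: A_def little_schroeder_rec_fps_def fps_X_mult_nth)
qed

section \<open>Dumont words\<close>

definition dumont_step :: "nat \<Rightarrow> nat \<Rightarrow> bool" where
  "dumont_step a b \<longleftrightarrow> (if even a then b < a else a < b)"

definition dumont_word :: "nat list \<Rightarrow> bool" where
  "dumont_word p \<longleftrightarrow> successively dumont_step p \<and> (p \<noteq> [] \<longrightarrow> odd (last p))"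

lemma dumont_word_Nil [simp]: "dumont_word []"
  by (simp add: dumont_word_def)

lemma dumont_word_Cons:
  "dumont_word (x # ys) \<longleftrightarrow> (if ys = [] then odd x else dumont_step x (hd ys) \<and> dumont_word ys)"
  by (cases ys) (auto simp: dumont_word_def)

lemma dumont_condition_iff:
  "(\<forall>i < length p. (even (p ! i) \<longrightarrow> i + 1 < length p \<and> p ! i > p ! (i + 1)) \<and>
                   (odd (p ! i) \<longrightarrow> i + 1 = length p \<or> p ! i < p ! (i + 1)))
   \<longleftrightarrow> dumont_word p"
proof (induction p)
  case Nil
  then show ?case by simp
next
  case (Cons x xs)
  then show ?case
    by (cases xs) (auto simp: All_less_Suc2 dumont_word_Cons dumont_step_def)
qed

lemma dumont_word_append:
  assumes "dumont_word xs" "dumont_word ys" "xs \<noteq> [] \<Longrightarrow> ys \<noteq> [] \<Longrightarrow> last xs < hd ys"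
  shows "dumont_word (xs @ ys)"
  using assms by (cases "ys = []") (auto simp: dumont_word_def dumont_step_def successively_append_iff)

lemma dumont_word_appendD: "dumont_word (xs @ ys) \<Longrightarrow> dumont_word ys"
  by (auto simp: dumont_word_def successively_append_iff)

lemma dumont_word_prefix_below:
  assumes "dumont_word (xs @ y # ys)" "\<forall>x\<in>set xs. x < y"
  shows "dumont_word xs"
proof (cases "xs = []")
  case False
  then have "dumont_step (last xs) y" "last xs < y"
    using assms by (auto simp: dumont_word_def successively_append_iff)
  then show ?thesis
    using assms(1) by (auto simp: dumont_word_def dumont_step_def successively_append_iff)
qed simp

lemma odd_Min_dumont_word:
  assumes "dumont_word p" "p \<noteq> []"
  shows "odd (Min (set p))"
proof -
  define m where "m = Min (set p)"
  have "m \<in> set p"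
    using assms(2) by (simp add: m_def)
  then obtain xs ys where p: "p = xs @ m # ys"
    by (meson split_list)
  then have tail: "dumont_word (m # ys)"
    using assms(1) dumont_word_appendD by blast
  show ?thesis
  proof (cases ys)
    case Nil
    then show ?thesis using tail by (simp add: m_def dumont_word_Cons)
  next
    case (Cons z zs)
    then have "z \<in> set p" using p by simp
    then have "m \<le> z" by (simp add: m_def)
    moreover have "dumont_step m z" using tail Cons by (simp add: dumont_word_Cons)
    ultimately show ?thesis by (auto simp: m_def dumont_step_def)
  qed
qed

abbreviation shift :: "nat \<Rightarrow> nat list \<Rightarrow> nat list" where
  "shift c xs \<equiv> map (\<lambda>v. v + c) xs"

lemma dumont_word_shift_iff:
  assumes "even c"
  shows "dumont_word (shift c p) \<longleftrightarrow> dumont_word p"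
proof -
  have "dumont_step (a + c) (b + c) \<longleftrightarrow> dumont_step a b" for a b
    using assms by (simp add: dumont_step_def)
  then show ?thesis
    using assms by (cases "p = []") (simp_all add: dumont_word_def successively_map last_map)
qed

section \<open>Avoiding 2341 and 2413\<close>

lemma contains_pattern_length: "contains_pattern p \<tau> \<Longrightarrow> length \<tau> \<le> length p"
  unfolding contains_pattern_def order_iso_def by (metis list_emb_length)

lemma avoids_all_short: "\<forall>\<tau>\<in>T. length p < length \<tau> \<Longrightarrow> avoids_all p T"
  using contains_pattern_length by (fastforce simp: avoids_all_def)

lemma contains_pattern_subseq:
  "subseq p q \<Longrightarrow> contains_pattern p \<tau> \<Longrightarrow> contains_pattern q \<tau>"
  unfolding contains_pattern_def by (meson subseq_order.trans)

lemma order_iso_map_strict_mono: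
  "strict_mono f \<Longrightarrow> order_iso (map f xs) ys \<longleftrightarrow> order_iso xs ys"
  by (simp add: order_iso_def strict_mono_less)

lemma contains_pattern_map_strict_mono:
  assumes "strict_mono f"
  shows "contains_pattern (map f p) \<tau> \<longleftrightarrow> contains_pattern p \<tau>"
proof
  assume "contains_pattern (map f p) \<tau>"
  then obtain xs where "subseq xs (map f p)" "order_iso xs \<tau>"
    by (auto simp: contains_pattern_def)
  moreover from \<open>subseq xs (map f p)\<close> obtain zs where "subseq zs p" "xs = map f zs"
    by (metis subseq_conv_nths nths_map)
  ultimately show "contains_pattern p \<tau>"
    using assms by (auto simp: contains_pattern_def order_iso_map_strict_mono)
next
  assume "contains_pattern p \<tau>"
  then show "contains_pattern (map f p) \<tau>"
    using assms by (auto simp: contains_pattern_def order_iso_map_strict_mono intro: subseq_map)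
qed

lemma avoids_all_subseq: "subseq p q \<Longrightarrow> avoids_all q T \<Longrightarrow> avoids_all p T"
  by (meson avoids_all_def contains_pattern_subseq)

lemma avoids_all_shift_iff: "avoids_all (shift c p) T \<longleftrightarrow> avoids_all p T"
  by (simp add: avoids_all_def contains_pattern_map_strict_mono strict_mono_def)

lemma contains_pattern_length4:
  assumes "length \<tau> = 4"
  shows "contains_pattern p \<tau> \<longleftrightarrow> (\<exists>a b c d. subseq [a, b, c, d] p \<and> order_iso [a, b, c, d] \<tau>)"
proof -
  have "order_iso xs \<tau> \<Longrightarrow> \<exists>a b c d. xs = [a, b, c, d]" for xs
    using assms unfolding order_iso_def by (simp add: numeral_eq_Suc length_Suc_conv) blast
  then show ?thesis
    unfolding contains_pattern_def by blast
qed

abbreviation avoids_2341_2413 :: "nat list \<Rightarrow> bool" where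
  "avoids_2341_2413 p \<equiv> avoids_all p {[2, 3, 4, 1], [2, 4, 1, 3]}"

lemma avoids_2341_2413_iff:
  "avoids_2341_2413 p \<longleftrightarrow>
     \<not> (\<exists>a b c d. subseq [a, b, c, d] p \<and> d < a \<and> a < b \<and> b < c) \<and>
     \<not> (\<exists>a b c d. subseq [a, b, c, d] p \<and> c < a \<and> a < d \<and> d < b)"
proof -
  have "order_iso [a, b, c, d] [2, 3, 4, 1] \<longleftrightarrow> d < a \<and> a < b \<and> b < c"
    and "order_iso [a, b, c, d] [2, 4, 1, 3] \<longleftrightarrow> c < a \<and> a < d \<and> d < b" for a b c d :: nat
    by (simp_all add: order_iso_def All_less_Suc) auto
  then show ?thesis
    by (simp add: avoids_all_def contains_pattern_length4)
qed

lemma set_mono_subseq: "subseq xs ys \<Longrightarrow> set xs \<subseteq> set ys"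
  by (induction rule: list_emb.induct) auto

lemma subseq4_append_cases:
  assumes "subseq [a, b, c, d] (s @ t)"
  shows "subseq [a, b, c, d] s \<or> subseq [a, b, c, d] t \<or>
         (a \<in> set s \<and> c \<in> set t \<and> d \<in> set t) \<or> (a \<in> set s \<and> b \<in> set s \<and> d \<in> set t)"
proof -
  obtain xs ys where "[a, b, c, d] = xs @ ys" "subseq xs s" "subseq ys t"
    using assms by (rule subseq_appendE)
  moreover have "set xs \<subseteq> set s" "set ys \<subseteq> set t"
    using calculation by (simp_all add: set_mono_subseq)
  ultimately show ?thesis
    by (auto simp: Cons_eq_append_conv)
qed

text \<open>Both patterns begin with an ascent a < b, followed by b < c in 2341 and by a < d in 2413.\<close>

lemma avoids_2341_2413_transfer:
  assumes "avoids_2341_2413 s"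
    and "\<And>a b c d. subseq [a, b, c, d] p \<Longrightarrow> a < b \<Longrightarrow> b < c \<or> a < d \<Longrightarrow> subseq [a, b, c, d] s"
  shows "avoids_2341_2413 p"
  using assms unfolding avoids_2341_2413_iff by (meson order.strict_trans)

lemma avoids_2341_2413_append:
  assumes "avoids_2341_2413 s" "avoids_2341_2413 t" "\<forall>x\<in>set s. \<forall>y\<in>set t. x < y"
  shows "avoids_2341_2413 (s @ t)"
proof -
  have "subseq [a, b, c, d] s \<or> subseq [a, b, c, d] t"
    if "subseq [a, b, c, d] (s @ t)" "d < a \<or> c < a \<and> d < b" for a b c d
    using subseq4_append_cases[OF that(1)] that(2) assms(3) by fastforce
  then show ?thesis
    using assms(1,2) unfolding avoids_2341_2413_iff by meson
qed

lemma avoids_2341_2413_Cons_max: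
  assumes "avoids_2341_2413 s" "\<forall>y\<in>set s. y < M"
  shows "avoids_2341_2413 (M # s)"
  using assms(1)
proof (rule avoids_2341_2413_transfer)
  fix a b c d
  assume occ: "subseq [a, b, c, d] (M # s)" and "a < b"
  have "a \<noteq> M"
  proof
    assume "a = M"
    then have "b \<in> set s"
      using occ set_mono_subseq[of "[b, c, d]" s] by simp
    then show False
      using \<open>a = M\<close> \<open>a < b\<close> assms(2) by fastforce
  qed
  then show "subseq [a, b, c, d] s"
    using occ by simp
qed

lemma avoids_2341_2413_Cons_Cons_max:
  assumes "avoids_2341_2413 s" "\<forall>y\<in>set s. y < x" "x < M"
  shows "avoids_2341_2413 (x # M # s)"
  using assms(1)
proof (rule avoids_2341_2413_transfer)
  fix a b c d
  assume occ: "subseq [a, b, c, d] (x # M # s)" and ord: "a < b" "b < c \<or> a < d"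
  consider "a = x" "subseq [b, c, d] (M # s)" | "a = M" "subseq [b, c, d] s" | "subseq [a, b, c, d] s"
    using occ by (auto split: if_splits)
  then show "subseq [a, b, c, d] s"
  proof cases
    case 1
    show ?thesis
    proof (cases "b = M")
      case True
      then have "c \<in> set s" "d \<in> set s"
        using 1 set_mono_subseq[of "[c, d]" s] by simp_all
      then show ?thesis
        using True 1 ord assms(2,3) by fastforce
    next
      case False
      then have "b \<in> set s"
        using 1 set_mono_subseq[of "[b, c, d]" s] by simp
      then show ?thesis
        using 1 ord assms(2) by fastforce
    qed
  next
    case 2
    then have "b \<in> set s"
      using set_mono_subseq[of "[b, c, d]" s] by simp
    then show ?thesis
      using 2 ord assms(2,3) by fastforce
  qed
qed

section \<open>Splitting at the two largest letters\<close>

lemma is_perm_list_iff: "is_perm_list m p \<longleftrightarrow> distinct p \<and> set p = {1..m}"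
  by (metis card_atLeastAtMost diff_Suc_1 distinct_card is_perm_list_def)

definition dumont_av :: "nat \<Rightarrow> nat list set" where
  "dumont_av n = dumont1_avoiding n {[2, 3, 4, 1], [2, 4, 1, 3]}"

lemma mem_dumont_av:
  "p \<in> dumont_av n \<longleftrightarrow> distinct p \<and> set p = {1..2 * n} \<and> dumont_word p \<and> avoids_2341_2413 p"
proof -
  have "p \<in> dumont1 n \<longleftrightarrow> is_perm_list (2 * n) p \<and> dumont_word p"
    unfolding dumont1_def using dumont_condition_iff[of p] by (auto simp: is_perm_list_def)
  then show ?thesis
    by (auto simp: dumont_av_def dumont1_avoiding_def is_perm_list_iff)
qed

lemma length_dumont_av: "p \<in> dumont_av n \<Longrightarrow> length p = 2 * n"
  by (metis is_perm_list_def is_perm_list_iff mem_dumont_av)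

lemma finite_dumont_av: "finite (dumont_av n)"
proof (rule finite_subset)
  show "dumont_av n \<subseteq> {xs. set xs \<subseteq> {1..2 * n} \<and> length xs = 2 * n}"
    by (auto simp: mem_dumont_av length_dumont_av)
qed (rule finite_lists_length_eq, simp)

lemma dumont_av_0: "dumont_av 0 = {[]}"
  using avoids_all_short[of _ "[]"] by (auto simp: mem_dumont_av)

lemma set_shift: "set p = {1..m} \<Longrightarrow> set (shift c p) = {c + 1..c + m}"
  by (simp add: add.commute)

lemma initial_segment_partition:
  fixes A B :: "nat set"
  assumes "A \<union> B = {1..m}" "A \<inter> B = {}" "\<forall>a\<in>A. \<forall>b\<in>B. a < b"
  shows "A = {1..card A}"
proof (cases "A = {}")
  case False
  have "finite A"
    using assms(1) by (metis finite_Un finite_atLeastAtMost)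
  define t where "t = Max A"
  have "t \<in> A"
    using Max_in[OF \<open>finite A\<close> False] t_def by simp
  have "A = {1..t}"
  proof
    show "A \<subseteq> {1..t}"
      using assms(1) Max_ge[OF \<open>finite A\<close>] t_def by auto
    show "{1..t} \<subseteq> A"
    proof
      fix y
      assume y: "y \<in> {1..t}"
      moreover have "t \<in> {1..m}"
        using assms(1) \<open>t \<in> A\<close> by blast
      ultimately have "y \<in> A \<union> B"
        unfolding assms(1) by simp
      moreover have "y \<notin> B"
        using assms(3) \<open>t \<in> A\<close> y by fastforce
      ultimately show "y \<in> A" by blast
    qed
  qed
  then show ?thesis by simp
qed simp

lemma dumont_av_direct_sum_split:
  assumes "distinct (L @ R)" "set (L @ R) = {1..2 * n}"
    and "dumont_word L" "dumont_word R" "avoids_2341_2413 L" "avoids_2341_2413 R"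
    and "\<forall>x\<in>set L. \<forall>y\<in>set R. x < y"
  obtains k r where "k \<le> n" "L \<in> dumont_av k" "r \<in> dumont_av (n - k)" "R = shift (2 * k) r"
proof -
  define j where "j = length L"
  have L: "set L = {1..j}"
    using initial_segment_partition[of "set L" "set R" "2 * n"] assms(1,2,7)
    by (auto simp: j_def distinct_card)
  have "set R = set (L @ R) - set L"
    using assms(1) by auto
  also have "\<dots> = {j + 1..2 * n}"
    using assms(2) L by auto
  finally have R: "set R = {j + 1..2 * n}" .
  have "{1..j} \<subseteq> {1..2 * n}"
    using assms(2) L by auto
  then have "j \<le> 2 * n" by (cases "j = 0") auto
  have "even j"
  proof (cases "R = []")
    case True
    then have "j = 2 * n"
      using R \<open>j \<le> 2 * n\<close> by simp
    then show ?thesis by simp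
  next
    case False
    then have "set R \<noteq> {}" by simp
    then have "Min (set R) = j + 1"
      unfolding R by (intro Min_eqI) auto
    then show ?thesis
      using odd_Min_dumont_word[OF assms(4) False] by simp
  qed
  then obtain k where j: "j = 2 * k" by blast
  define r where "r = map (\<lambda>v. v - j) R"
  have Rr: "R = shift (2 * k) r"
    unfolding r_def map_map o_def using R j by (intro map_idI[symmetric]) auto
  show ?thesis
  proof
    show "k \<le> n" using \<open>j \<le> 2 * n\<close> j by simp
    show "L \<in> dumont_av k"
      using assms L j by (simp add: mem_dumont_av)
    show "R = shift (2 * k) r" by (fact Rr)
    have "(\<lambda>v. v + 2 * k) ` set r = (\<lambda>v. v + 2 * k) ` {1..2 * (n - k)}"
      using R Rr j \<open>k \<le> n\<close> by (simp; presburger)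
    moreover have "inj (\<lambda>v :: nat. v + 2 * k)"
      by (simp add: inj_def)
    ultimately have "set r = {1..2 * (n - k)}"
      by (simp only: inj_image_eq_iff)
    then show "r \<in> dumont_av (n - k)"
      using assms(1,4,6) Rr by (simp add: mem_dumont_av distinct_map dumont_word_shift_iff avoids_all_shift_iff)
  qed
qed

definition join_apart :: "nat \<Rightarrow> nat \<Rightarrow> nat list \<Rightarrow> nat list \<Rightarrow> nat list" where
  "join_apart n k s r = s @ (2 * n + 2) # shift (2 * k) r @ [2 * n + 1]"

definition join_adjacent :: "nat \<Rightarrow> nat \<Rightarrow> nat list \<Rightarrow> nat list \<Rightarrow> nat list" where
  "join_adjacent n k s r = s @ (2 * n + 1) # (2 * n + 2) # shift (2 * k) r"

lemma subseq_infix: "subseq xs (ys @ xs @ zs)"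
  by (intro sublist_imp_subseq sublist_appendI)

lemma subseq_of_members:
  assumes "x \<in> set L" "y \<in> set R"
  shows "subseq (x # A @ y # B) (L @ A @ R @ B)"
proof -
  have "subseq ([x] @ A @ [y] @ B) (L @ A @ R @ B)"
    using assms by (intro list_emb_append_mono) (simp_all add: subseq_singleton_left)
  then show ?thesis by simp
qed

lemma avoids_2341_2413_apart_separated:
  assumes "avoids_2341_2413 (L @ M # R @ [M'])" "distinct (L @ R)" "\<forall>x\<in>set L. x < M'" "M' < M"
  shows "\<forall>x\<in>set L. \<forall>y\<in>set R. x < y"
proof (intro ballI)
  fix x y
  assume xy: "x \<in> set L" "y \<in> set R"
  show "x < y"
  proof (rule ccontr)
    assume "\<not> x < y"
    moreover have "x \<noteq> y" and "x < M'"
      using xy assms(2,3) by auto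
    moreover have "subseq [x, M, y, M'] (L @ M # R @ [M'])"
      using subseq_of_members[OF xy, of "[M]" "[M']"] by simp
    ultimately show False
      using assms(1,4) unfolding avoids_2341_2413_iff by (meson linorder_neqE_nat)
  qed
qed

lemma avoids_2341_2413_adjacent_separated:
  assumes "avoids_2341_2413 (L @ M' # M # R)" "distinct (L @ R)" "\<forall>x\<in>set L. x < M'" "M' < M"
  shows "\<forall>x\<in>set L. \<forall>y\<in>set R. x < y"
proof (intro ballI)
  fix x y
  assume xy: "x \<in> set L" "y \<in> set R"
  show "x < y"
  proof (rule ccontr)
    assume "\<not> x < y"
    moreover have "x \<noteq> y" and "x < M'"
      using xy assms(2,3) by auto
    moreover have "subseq [x, M', M, y] (L @ M' # M # R)"
      using subseq_of_members[OF xy, of "[M', M]" "[]"] by simp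
    ultimately show False
      using assms(1,4) unfolding avoids_2341_2413_iff by (meson linorder_neqE_nat)
  qed
qed

lemma dumont_av_apart_split:
  assumes p: "L @ (2 * n + 2) # R @ [2 * n + 1] \<in> dumont_av (Suc n)"
  obtains k r where "k \<le> n" "L \<in> dumont_av k" "r \<in> dumont_av (n - k)" "R = shift (2 * k) r"
proof (rule dumont_av_direct_sum_split)
  let ?p = "L @ (2 * n + 2) # R @ [2 * n + 1]"
  have dist: "distinct ?p" and st: "set ?p = {1..2 * n + 2}"
    and dw: "dumont_word ?p" and av: "avoids_2341_2413 ?p"
    using p by (simp_all add: mem_dumont_av)
  show "distinct (L @ R)"
    using dist by simp
  have "set (L @ R) = set ?p - {2 * n + 1, 2 * n + 2}"
    using dist by auto
  also have "\<dots> = {1..2 * n}"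
    unfolding st by auto
  finally show "set (L @ R) = {1..2 * n}" .
  then have below: "\<forall>x\<in>set L. x \<le> 2 * n" "\<forall>x\<in>set R. x \<le> 2 * n"
    by auto
  show "dumont_word L"
    using dw below(1) by (intro dumont_word_prefix_below[of L "2 * n + 2" "R @ [2 * n + 1]"]) auto
  have "dumont_word (R @ [2 * n + 1])"
    using dw dumont_word_appendD[of "L @ [2 * n + 2]"] by simp
  then show "dumont_word R"
    using below(2) by (intro dumont_word_prefix_below[of R "2 * n + 1" "[]"]) auto
  have "subseq L ?p" "subseq R ?p"
    using subseq_infix[of L "[]"] subseq_infix[of R "L @ [2 * n + 2]" "[2 * n + 1]"] by simp_all
  then show "avoids_2341_2413 L" "avoids_2341_2413 R"
    using av avoids_all_subseq by blast+
  show "\<forall>x\<in>set L. \<forall>y\<in>set R. x < y"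
    using dist below(1) by (intro avoids_2341_2413_apart_separated[OF av]) auto
qed

lemma dumont_av_adjacent_split:
  assumes p: "L @ (2 * n + 1) # (2 * n + 2) # R \<in> dumont_av (Suc n)"
  obtains k r where "k < n" "L \<in> dumont_av k" "r \<in> dumont_av (n - k)" "R = shift (2 * k) r"
proof -
  let ?p = "L @ (2 * n + 1) # (2 * n + 2) # R"
  have dist: "distinct ?p" and st: "set ?p = {1..2 * n + 2}"
    and dw: "dumont_word ?p" and av: "avoids_2341_2413 ?p"
    using p by (simp_all add: mem_dumont_av)
  obtain k r where "k \<le> n" and L: "L \<in> dumont_av k" and r: "r \<in> dumont_av (n - k)"
    and Rr: "R = shift (2 * k) r"
  proof (rule dumont_av_direct_sum_split)
    show "distinct (L @ R)"
      using dist by simp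
    have "set (L @ R) = set ?p - {2 * n + 1, 2 * n + 2}"
      using dist by auto
    also have "\<dots> = {1..2 * n}"
      unfolding st by auto
    finally show "set (L @ R) = {1..2 * n}" .
    then have below: "\<forall>x\<in>set L. x \<le> 2 * n"
      by auto
    show "dumont_word L"
      using dw below by (intro dumont_word_prefix_below[of L "2 * n + 1" "(2 * n + 2) # R"]) auto
    show "dumont_word R"
      using dw dumont_word_appendD[of "L @ [2 * n + 1, 2 * n + 2]"] by simp
    have "subseq L ?p" "subseq R ?p"
      using subseq_infix[of L "[]"] subseq_infix[of R "L @ [2 * n + 1, 2 * n + 2]" "[]"] by simp_all
    then show "avoids_2341_2413 L" "avoids_2341_2413 R"
      using av avoids_all_subseq by blast+
    show "\<forall>x\<in>set L. \<forall>y\<in>set R. x < y"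
      using dist below by (intro avoids_2341_2413_adjacent_separated[OF av]) auto
  qed
  moreover have "R \<noteq> []"
    using dw by (auto simp: dumont_word_def)
  ultimately have "k < n"
    using Rr length_dumont_av[OF r] by (cases "k = n") auto
  from this L r Rr show ?thesis
    by (rule that)
qed

lemma shift_mem_dumont_av:
  assumes "k \<le> n" "r \<in> dumont_av (n - k)"
  shows "distinct (shift (2 * k) r)" "set (shift (2 * k) r) = {2 * k + 1..2 * n}"
    "dumont_word (shift (2 * k) r)" "avoids_2341_2413 (shift (2 * k) r)"
proof -
  have "2 * (n - k) + 2 * k = 2 * n"
    using assms(1) by simp
  then show "distinct (shift (2 * k) r)" "set (shift (2 * k) r) = {2 * k + 1..2 * n}"
    "dumont_word (shift (2 * k) r)" "avoids_2341_2413 (shift (2 * k) r)"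
    using assms(2) by (simp_all add: mem_dumont_av distinct_map inj_on_def set_shift
        dumont_word_shift_iff avoids_all_shift_iff)
qed

lemma join_apart_mem:
  assumes "k \<le> n" "s \<in> dumont_av k" "r \<in> dumont_av (n - k)"
  shows "join_apart n k s r \<in> dumont_av (Suc n)"
proof -
  define R where "R = shift (2 * k) r"
  note R = shift_mem_dumont_av[OF assms(1,3), folded R_def]
  have s: "distinct s" "set s = {1..2 * k}" "dumont_word s" "avoids_2341_2413 s"
    using assms(2) by (simp_all add: mem_dumont_av)
  have p: "join_apart n k s r = s @ (2 * n + 2) # R @ [2 * n + 1]"
    by (simp add: join_apart_def R_def)
  have R_below: "\<forall>x\<in>set R. x \<le> 2 * n"
    using R(2) by simp
  have "dumont_word (R @ [2 * n + 1])"
    using R(2,3) by (intro dumont_word_append) (auto simp: dumont_word_Cons dest: last_in_set)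
  then have "dumont_word ((2 * n + 2) # R @ [2 * n + 1])"
    using R_below by (cases R) (auto simp: dumont_word_Cons dumont_step_def)
  then have "dumont_word (join_apart n k s r)"
    unfolding p using s(2,3) assms(1) by (intro dumont_word_append) (auto dest: last_in_set)
  moreover have "avoids_2341_2413 (R @ [2 * n + 1])"
    using R(2,4) avoids_all_short[of _ "[2 * n + 1]"] by (intro avoids_2341_2413_append) auto
  then have "avoids_2341_2413 ((2 * n + 2) # R @ [2 * n + 1])"
    using R(2) by (intro avoids_2341_2413_Cons_max) auto
  then have "avoids_2341_2413 (join_apart n k s r)"
    unfolding p using s(2,4) R(2) assms(1) by (intro avoids_2341_2413_append) auto
  moreover have "distinct (join_apart n k s r)" "set (join_apart n k s r) = {1..2 * Suc n}"
    unfolding p using s(1,2) R(1,2) assms(1) by auto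
  ultimately show ?thesis
    by (simp add: mem_dumont_av)
qed

lemma join_adjacent_mem:
  assumes "k < n" "s \<in> dumont_av k" "r \<in> dumont_av (n - k)"
  shows "join_adjacent n k s r \<in> dumont_av (Suc n)"
proof -
  define R where "R = shift (2 * k) r"
  note R = shift_mem_dumont_av[OF less_imp_le[OF assms(1)] assms(3), folded R_def]
  have s: "distinct s" "set s = {1..2 * k}" "dumont_word s" "avoids_2341_2413 s"
    using assms(2) by (simp_all add: mem_dumont_av)
  have p: "join_adjacent n k s r = s @ (2 * n + 1) # (2 * n + 2) # R"
    by (simp add: join_adjacent_def R_def)
  have "R \<noteq> []"
    using R(2) assms(1) by auto
  moreover have "\<forall>x\<in>set R. x \<le> 2 * n"
    using R(2) by simp
  ultimately have "dumont_word ((2 * n + 1) # (2 * n + 2) # R)"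
    using R(3) by (cases R) (auto simp: dumont_word_Cons dumont_step_def)
  then have "dumont_word (join_adjacent n k s r)"
    unfolding p using s(2,3) assms(1) by (intro dumont_word_append) (auto dest: last_in_set)
  moreover have "avoids_2341_2413 ((2 * n + 1) # (2 * n + 2) # R)"
    using R(2,4) by (intro avoids_2341_2413_Cons_Cons_max) auto
  then have "avoids_2341_2413 (join_adjacent n k s r)"
    unfolding p using s(2,4) R(2) assms(1) by (intro avoids_2341_2413_append) auto
  moreover have "distinct (join_adjacent n k s r)" "set (join_adjacent n k s r) = {1..2 * Suc n}"
    unfolding p using s(1,2) R(1,2) assms(1) by auto
  ultimately show ?thesis
    by (simp add: mem_dumont_av)
qed

lemma dumont_av_Suc_cases:
  assumes "p \<in> dumont_av (Suc n)"
  obtains (apart) L R where "p = L @ (2 * n + 2) # R @ [2 * n + 1]"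
    | (adjacent) L R where "p = L @ (2 * n + 1) # (2 * n + 2) # R"
proof -
  have p: "distinct p" "set p = {1..2 * n + 2}" "dumont_word p"
    using assms by (simp_all add: mem_dumont_av)
  then have "2 * n + 1 \<in> set p"
    by simp
  then obtain L B where pLB: "p = L @ (2 * n + 1) # B"
    by (meson split_list)
  show ?thesis
  proof (cases B)
    case Nil
    have "2 * n + 2 \<in> set p"
      using p(2) by simp
    then have "2 * n + 2 \<in> set L"
      using pLB Nil by simp
    then obtain L' R where "L = L' @ (2 * n + 2) # R"
      by (meson split_list)
    then show ?thesis
      using pLB Nil by (intro apart) simp
  next
    case (Cons y R)
    have "dumont_step (2 * n + 1) y"
      using p(3) pLB Cons dumont_word_appendD[of L "(2 * n + 1) # y # R"]
      by (simp add: dumont_word_Cons)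
    moreover have "y \<le> 2 * n + 2"
      using p(2) pLB Cons by auto
    ultimately have "y = 2 * n + 2"
      by (simp add: dumont_step_def)
    then show ?thesis
      using pLB Cons by (intro adjacent) simp
  qed
qed

lemma dumont_av_Suc:
  "dumont_av (Suc n) =
     (\<lambda>(k, s, r). join_apart n k s r) ` (SIGMA k:{..n}. dumont_av k \<times> dumont_av (n - k)) \<union>
     (\<lambda>(k, s, r). join_adjacent n k s r) ` (SIGMA k:{..<n}. dumont_av k \<times> dumont_av (n - k))"
  (is "_ = ?A \<union> ?B")
proof
  show "?A \<union> ?B \<subseteq> dumont_av (Suc n)"
    by (auto intro: join_apart_mem join_adjacent_mem)
  show "dumont_av (Suc n) \<subseteq> ?A \<union> ?B"
  proof
    fix p
    assume p: "p \<in> dumont_av (Suc n)"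
    then show "p \<in> ?A \<union> ?B"
    proof (cases rule: dumont_av_Suc_cases)
      case (apart L R)
      then obtain k r where "k \<le> n" "L \<in> dumont_av k" "r \<in> dumont_av (n - k)" "R = shift (2 * k) r"
        using p dumont_av_apart_split by metis
      then show ?thesis
        using apart by (intro UnI1 rev_image_eqI[of "(k, L, r)"]) (simp_all add: join_apart_def)
    next
      case (adjacent L R)
      then obtain k r where "k < n" "L \<in> dumont_av k" "r \<in> dumont_av (n - k)" "R = shift (2 * k) r"
        using p dumont_av_adjacent_split by metis
      then show ?thesis
        using adjacent by (intro UnI2 rev_image_eqI[of "(k, L, r)"]) (simp_all add: join_adjacent_def)
    qed
  qed
qed

lemma takeWhile_append_Cons_notin: "x \<notin> set s \<Longrightarrow> takeWhile (\<lambda>y. y \<noteq> x) (s @ x # w) = s"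
  by (induction s) auto

lemma join_eq_imp_eq:
  assumes "s \<in> dumont_av k" "s' \<in> dumont_av k'" "x \<notin> set s" "x \<notin> set s'"
    and eq: "s @ x # u @ shift (2 * k) r @ v = s' @ x # u @ shift (2 * k') r' @ v"
  shows "k = k' \<and> s = s' \<and> r = r'"
proof -
  have "s = s'"
    using takeWhile_append_Cons_notin[OF assms(3)] takeWhile_append_Cons_notin[OF assms(4)] eq by metis
  moreover from this have "k = k'"
    using length_dumont_av[OF assms(1)] length_dumont_av[OF assms(2)] by simp
  moreover from calculation have "shift (2 * k) r = shift (2 * k) r'"
    using eq by simp
  ultimately show ?thesis
    by (simp add: inj_map_eq_map inj_def)
qed

lemma inj_on_join_apart:
  "inj_on (\<lambda>(k, s, r). join_apart n k s r) (SIGMA k:{..n}. dumont_av k \<times> dumont_av (n - k))"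
proof (rule inj_onI, clarsimp)
  fix k s r k' s' r'
  assume "k \<le> n" "s \<in> dumont_av k" "k' \<le> n" "s' \<in> dumont_av k'"
    and "join_apart n k s r = join_apart n k' s' r'"
  then show "k = k' \<and> s = s' \<and> r = r'"
    by (intro join_eq_imp_eq[where x = "2 * n + 2" and u = "[]" and v = "[2 * n + 1]"])
       (auto simp: join_apart_def mem_dumont_av)
qed

lemma inj_on_join_adjacent:
  "inj_on (\<lambda>(k, s, r). join_adjacent n k s r) (SIGMA k:{..<n}. dumont_av k \<times> dumont_av (n - k))"
proof (rule inj_onI, clarsimp)
  fix k s r k' s' r'
  assume "k < n" "s \<in> dumont_av k" "k' < n" "s' \<in> dumont_av k'"
    and "join_adjacent n k s r = join_adjacent n k' s' r'"
  then show "k = k' \<and> s = s' \<and> r = r'"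
    by (intro join_eq_imp_eq[where x = "2 * n + 1" and u = "[2 * n + 2]" and v = "[]"])
       (auto simp: join_adjacent_def mem_dumont_av)
qed

lemma last_join_apart: "last (join_apart n k s r) = 2 * n + 1"
  by (simp add: join_apart_def)

lemma last_join_adjacent:
  assumes "k < n" "r \<in> dumont_av (n - k)"
  shows "last (join_adjacent n k s r) \<le> 2 * n"
proof -
  define R where "R = shift (2 * k) r"
  have "R \<noteq> []"
    using length_dumont_av[OF assms(2)] assms(1) by (auto simp: R_def)
  moreover have "set R = {2 * k + 1..2 * n}"
    unfolding R_def using shift_mem_dumont_av(2)[OF less_imp_le[OF assms(1)] assms(2)] .
  ultimately have "last R \<le> 2 * n"
    using last_in_set by fastforce
  then show ?thesis
    using \<open>R \<noteq> []\<close> by (simp add: join_adjacent_def R_def)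
qed

lemma card_dumont_av_Suc:
  "card (dumont_av (Suc n)) =
     (\<Sum>k\<le>n. card (dumont_av k) * card (dumont_av (n - k))) +
     (\<Sum>k<n. card (dumont_av k) * card (dumont_av (n - k)))"
proof -
  define A where "A = (SIGMA k:{..n}. dumont_av k \<times> dumont_av (n - k))"
  define B where "B = (SIGMA k:{..<n}. dumont_av k \<times> dumont_av (n - k))"
  define f where "f = (\<lambda>(k, s, r). join_apart n k s r)"
  define g where "g = (\<lambda>(k, s, r). join_adjacent n k s r)"
  have "last p = 2 * n + 1" if "p \<in> f ` A" for p
    using that by (auto simp: f_def last_join_apart)
  moreover have "last p \<le> 2 * n" if "p \<in> g ` B" for p
    using that last_join_adjacent by (auto simp: g_def B_def)
  ultimately have "f ` A \<inter> g ` B = {}"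
    by fastforce
  moreover have "finite A" "finite B"
    by (simp_all add: A_def B_def finite_dumont_av)
  moreover have "inj_on f A" "inj_on g B"
    using inj_on_join_apart inj_on_join_adjacent by (simp_all add: A_def B_def f_def g_def)
  ultimately have "card (dumont_av (Suc n)) = card A + card B"
    unfolding dumont_av_Suc A_def[symmetric] B_def[symmetric] f_def[symmetric] g_def[symmetric]
    by (simp add: card_Un_disjoint card_image)
  then show ?thesis
    by (simp add: A_def B_def card_SigmaI card_cartesian_product finite_dumont_av)
qed

lemma card_dumont_av: "card (dumont_av n) = little_schroeder_rec n"
proof (induction n rule: less_induct)
  case (less n)
  show ?case
  proof (cases n)
    case 0
    then show ?thesis by (simp add: dumont_av_0)
  next
    case (Suc m)
    then show ?thesis
      using less by (simp add: card_dumont_av_Suc)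
  qed
qed

theorem theorem3p5:
  fixes n :: nat
  shows "real (card (dumont1_avoiding n {[2,3,4,1], [2,4,1,3]})) = little_schroeder (n + 1)"
  using card_dumont_av[of n] little_schroeder_Suc_eq_rec[of n] by (simp add: dumont_av_def)

end
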